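(* Let $d\ge 3$ and $0\le j\le \left\lfloor \frac{3(d-1)}{2}\right\rfloor$. The elements of $\operatorname{Ker}(E)\cap A(d)_j$ on which every $\sigma\in S_3$ acts by $\operatorname{sgn}(\sigma)$ are exactly the elements $P=\sum_{\mu\in\mathscr{P}^+_{3,d-1}(j)}\beta_\mu\langle x^\mu\rangle$ ($\beta_\mu\in\Bbbk$) with $E(P)=0$, and the multiplicity of the sign representation in $\operatorname{Ker}(E)\cap A(d)_j$ is $$\operatorname{sign}(d,j)=p^+_{3,d-1}(j)-p^+_{3,d-1}(j-1).$$
   Context: $\Bbbk$ is an algebraically closed field of characteristic $0$. For an integer $d\ge 1$, $A(d)=\Bbbk[x_1,x_2,x_3]/(x_1^d,x_2^d,x_3^d)=\bigoplus_j A(d)_j$ with its standard grading. The symmetric group $S_3$ acts on $A(d)$ by permuting the variables. The linear map $E:A(d)_{j+1}\to A(d)_j$ is defined on the monomial basis by $E(x_1^{a_1}x_2^{a_2}x_3^{a_3})=\sum_{k=1}^{3} a_k(d-a_k)\,x_1^{a_1}\cdots x_k^{a_k-1}\cdots x_3^{a_3}$; it commutes with the $S_3$-action. $\operatorname{sign}(d,j)$ denotes the multiplicity of the sign representation in $\operatorname{Ker}(E)\cap A(d)_j$. For integers $l\ge0$, $n$: $\mathscr{P}^+_{3,l}(n)$ is the set of integer triples $(a,b,c)$ with $l\ge a> b> c\ge 0$ and $a+b+c=n$, and $p^+_{3,l}(n)=|\mathscr{P}^+_{3,l}(n)|$ ($=0$ for $n<0$). For $\mu=(a,b,c)$, $\langle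 x^\mu\rangle=\sum_{\sigma\in S_3}\operatorname{sgn}(\sigma)\,\sigma(x_1^ax_2^bx_3^c)$. *)

theory Defs
  imports Main "HOL-Computational_Algebra.Polynomial" "HOL-Combinatorics.Permutations"
    "HOL-Library.Function_Algebras"
begin

text \<open>Monomials x1^(e 0) x2^(e 1) x3^(e 2) of A(d) are encoded by exponent functions
  e :: nat => nat with e i = 0 for i >= 3; an element of A(d) is its coefficient function
  (exponent function => field element), supported on exponents with e i < d.
  Variables x_1, x_2, x_3 correspond to indices 0, 1, 2.\<close>

type_synonym expo = "nat \<Rightarrow> nat"

definition mons :: "nat \<Rightarrow> nat \<Rightarrow> expo set" where
  "mons d j = {e. (\<forall>i\<ge>3. e i = 0) \<and> (\<forall>i<3. e i < d) \<and> e 0 + e 1 + e 2 = j}"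

definition Adeg :: "nat \<Rightarrow> nat \<Rightarrow> (expo \<Rightarrow> 'k::field) set" where
  "Adeg d j = {P. \<forall>e. e \<notin> mons d j \<longrightarrow> P e = 0}"

text \<open>The operator E, written on coefficients: the coefficient of x^e in E(P) collects
  the contributions a_k (d - a_k) of the monomials x^(e + e_k), with a_k = e k + 1.\<close>
definition Eop :: "nat \<Rightarrow> (expo \<Rightarrow> 'k::field) \<Rightarrow> (expo \<Rightarrow> 'k)" where
  "Eop d P = (\<lambda>e. \<Sum>k<3. of_nat ((e k + 1) * (d - (e k + 1))) * P (e(k := e k + 1)))"

text \<open>Action of a permutation sigma of {0,1,2} (variables) on A(d):
  sigma (x1^a1 x2^a2 x3^a3) = x_{sigma 1}^a1 x_{sigma 2}^a2 x_{sigma 3}^a3,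
  i.e. on coefficient functions (sigma . P)(e) = P (e o sigma).\<close>
definition act :: "(nat \<Rightarrow> nat) \<Rightarrow> (expo \<Rightarrow> 'k::field) \<Rightarrow> (expo \<Rightarrow> 'k)" where
  "act \<sigma> P = (\<lambda>e. P (e \<circ> \<sigma>))"

definition sign_isotypic :: "(expo \<Rightarrow> 'k::field) \<Rightarrow> bool" where
  "sign_isotypic P \<longleftrightarrow> (\<forall>\<sigma>. \<sigma> permutes {0,1,2::nat} \<longrightarrow> act \<sigma> P = (\<lambda>e. of_int (sign \<sigma>) * P e))"

definition kerE :: "nat \<Rightarrow> nat \<Rightarrow> (expo \<Rightarrow> 'k::field) set" where
  "kerE d j = {P \<in> Adeg d j. Eop d P = 0}"

definition sign_part :: "nat \<Rightarrow> nat \<Rightarrow> (expo \<Rightarrow> 'k::field) set" where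
  "sign_part d j = {P \<in> kerE d j. sign_isotypic P}"

text \<open>Multiplicity of the (one-dimensional) sign representation in Ker(E) cap A(d)_j:
  the dimension over k of the sign-isotypic subspace.\<close>
definition sign_mult :: "'k::field itself \<Rightarrow> nat \<Rightarrow> nat \<Rightarrow> nat" where
  "sign_mult _ d j = vector_space.dim (\<lambda>(c::'k) (f::expo \<Rightarrow> 'k). (\<lambda>x. c * f x)) (sign_part d j)"

definition Pplus :: "nat \<Rightarrow> int \<Rightarrow> (nat \<times> nat \<times> nat) set" where
  "Pplus l n = {(a, b, c). l \<ge> a \<and> a > b \<and> b > c \<and> int (a + b + c) = n}"

definition pplus :: "nat \<Rightarrow> int \<Rightarrow> nat" where
  "pplus l n = card (Pplus l n)"

definition expo_of :: "nat \<times> nat \<times> nat \<Rightarrow> expo" where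
  "expo_of \<mu> = (case \<mu> of (a, b, c) \<Rightarrow> (\<lambda>i. if i = 0 then a else if i = 1 then b else if i = 2 then c else 0))"

definition monom3 :: "nat \<times> nat \<times> nat \<Rightarrow> (expo \<Rightarrow> 'k::field)" where
  "monom3 \<mu> = (\<lambda>e. if e = expo_of \<mu> then 1 else 0)"

definition alt :: "nat \<times> nat \<times> nat \<Rightarrow> (expo \<Rightarrow> 'k::field)" where
  "alt \<mu> = (\<Sum>\<sigma>\<in>{\<sigma>. \<sigma> permutes {0,1,2::nat}}. (\<lambda>e. of_int (sign \<sigma>) * act \<sigma> (monom3 \<mu>) e))"

end

theory Submission
  imports Defs
begin

text \<open>A sign-isotypic element of A(d)_j vanishes on monomials with a repeated exponent and is
  determined by its coefficients at monomials with strictly decreasing exponents. Hence the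
  alternants <x^mu>, mu in P^+_{3,d-1}(j), form a basis of the sign component S_j, which gives the
  first claim and dim S_j = p^+_{3,d-1}(j).

  Let F be multiplication by x_1 + x_2 + x_3. On degree m, EF - FE acts as the scalar
  3(d - 1) - 2m, as for an sl_2-triple, and a descending induction on the degree shows that EF is
  injective on S_m whenever 2m < 3(d - 1). For j <= 3(d - 1)/2 the image E(S_j) thus lies between
  EF(S_{j-1}) and S_{j-1}, which have the same dimension p^+_{3,d-1}(j - 1), and rank-nullity for
  E : S_j -> S_{j-1} gives the multiplicity of the sign representation.\<close>

lemma sum_fun_apply: "(\<Sum>x\<in>A. f x) e = (\<Sum>x\<in>A. f x e)"
  by (induction A rule: infinite_finite_induct) auto

lemma sum_sum_diff_diagonal:
  fixes a b :: "'i \<Rightarrow> 'i \<Rightarrow> 'a::ab_group_add"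
  assumes "finite A" and off_diagonal: "\<And>k l. k \<in> A \<Longrightarrow> l \<in> A \<Longrightarrow> k \<noteq> l \<Longrightarrow> a k l = b k l"
  shows "(\<Sum>k\<in>A. \<Sum>l\<in>A. a k l) - (\<Sum>k\<in>A. \<Sum>l\<in>A. b k l) = (\<Sum>k\<in>A. a k k - b k k)"
proof -
  have "(\<Sum>k\<in>A. \<Sum>l\<in>A. a k l) - (\<Sum>k\<in>A. \<Sum>l\<in>A. b k l)
      = (\<Sum>k\<in>A. \<Sum>l\<in>A. if l = k then a k k - b k k else 0)"
    unfolding sum_subtractf[symmetric] using off_diagonal
    by (intro sum.cong refl) auto
  also have "\<dots> = (\<Sum>k\<in>A. a k k - b k k)"
    using \<open>finite A\<close> by simp
  finally show ?thesis .
qed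

lemma of_nat_mult_diff_Suc:
  "a < d \<Longrightarrow> (of_nat ((a + 1) * (d - (a + 1))) :: 'k::comm_ring_1) - of_nat (a * (d - a))
    = of_nat d - 1 - 2 * of_nat a"
proof -
  assume "a < d"
  then obtain r where d: "d = a + 1 + r" using less_imp_Suc_add by fastforce
  have "(of_nat ((a + 1) * (d - (a + 1))) :: 'k) = (of_nat a + 1) * of_nat r"
    "(of_nat (a * (d - a)) :: 'k) = of_nat a * (of_nat r + 1)"
    by (simp_all add: d algebra_simps)
  then show ?thesis by (simp add: d algebra_simps)
qed

section \<open>Rank--nullity for finitely spanned subspaces\<close>

text \<open>The space of all coefficient functions is infinite-dimensional, so the library's
  rank--nullity theorem does not apply; it is proved here for subspaces spanned by a finite set.\<close>

context vector_space
begin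

lemma span_Int_span_disjoint:
  assumes B: "independent B" and "K \<subseteq> B" "C \<subseteq> B" "K \<inter> C = {}"
    and x: "x \<in> span K" "x \<in> span C"
  shows "x = 0"
proof -
  have "representation B x = representation K x" "representation B x = representation C x"
    using representation_extend[OF B x(1) assms(2)] representation_extend[OF B x(2) assms(3)]
    by simp_all
  then have "representation B x b = 0" for b
    using representation_ne_zero[of K x b] representation_ne_zero[of C x b] \<open>K \<inter> C = {}\<close>
    by (metis disjoint_iff)
  moreover have "x \<in> span B" using x(1) span_mono[OF \<open>K \<subseteq> B\<close>] by blast
  ultimately show "x = 0" using sum_nonzero_representation_eq[OF B, of x] by simp
qed

lemma dim_le_dim_if_finite_span:
  assumes "S \<subseteq> T" "T \<subseteq> span W" "finite W"
  shows "dim S \<le> dim T"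
proof -
  obtain B where B: "B \<subseteq> T" "independent B" "T \<subseteq> span B" "card B = dim T"
    using basis_exists by blast
  have "finite B" using independent_span_bound[OF assms(3) B(2)] B(1) assms(2) by blast
  then show ?thesis using dim_le_card[of S B] B assms(1) by auto
qed

end

lemma (in vector_space_pair) dim_kernel_add_dim_image:
  assumes f: "Vector_Spaces.linear s1 s2 f" and S: "vs1.subspace S"
    and W: "finite W" "S \<subseteq> vs1.span W"
  shows "vs1.dim S = vs1.dim {x \<in> S. f x = 0} + vs2.dim (f ` S)"
proof -
  interpret f: Vector_Spaces.linear s1 s2 f by (fact f)
  obtain K where K: "K \<subseteq> {x \<in> S. f x = 0}" "vs1.independent K"
      "{x \<in> S. f x = 0} \<subseteq> vs1.span K" "card K = vs1.dim {x \<in> S. f x = 0}"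
    using vs1.basis_exists by blast
  obtain B where B: "K \<subseteq> B" "B \<subseteq> S" "vs1.independent B" "S \<subseteq> vs1.span B"
    using vs1.maximal_independent_subset_extend[of K S] K(1,2) by blast
  have "finite B" using vs1.independent_span_bound[OF W(1) B(3)] B(2) W(2) by blast
  define C where "C = B - K"
  have card_B: "card B = card K + card C"
    using card_Un_disjoint[of K C] \<open>finite B\<close> B(1) by (auto simp: C_def Un_absorb1 finite_subset)
  have "inj_on f (vs1.span C)"
  proof (subst f.inj_on_iff_eq_0[OF vs1.subspace_span], intro ballI impI)
    fix x assume x: "x \<in> vs1.span C" "f x = 0"
    have "vs1.span C \<subseteq> S" using B(2) by (intro vs1.span_minimal S) (auto simp: C_def)
    with x K(3) have "x \<in> vs1.span K" by blast
    with x(1) show "x = 0"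
      using vs1.span_Int_span_disjoint[OF B(3,1), of C] by (auto simp: C_def)
  qed
  then have indep: "vs2.independent (f ` C)" and card: "card (f ` C) = card C"
    using f.independent_injective_image vs1.independent_mono[OF B(3)]
      card_image[OF inj_on_subset[OF _ vs1.span_superset]] by (auto simp: C_def)
  have "vs2.span (f ` B) = vs2.span (f ` C)"
  proof -
    have "f ` B \<subseteq> insert 0 (f ` C)" using K(1) by (auto simp: C_def)
    then have "vs2.span (f ` B) \<subseteq> vs2.span (f ` C)"
      using vs2.span_mono[of "f ` B" "insert 0 (f ` C)"] by simp
    moreover have "vs2.span (f ` C) \<subseteq> vs2.span (f ` B)"
      by (intro vs2.span_mono) (auto simp: C_def)
    ultimately show ?thesis by (rule antisym)
  qed
  then have "f ` S = vs2.span (f ` C)"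
    using vs1.span_subspace[OF B(2,4) S] f.span_image by metis
  then show ?thesis
    using vs2.dim_span_eq_card_independent[OF indep] card card_B K(4)
      vs1.basis_card_eq_dim[OF B(2,4,3)] by simp
qed

lemma permutes_012_cases:
  assumes "\<sigma> permutes {0,1,2::nat}"
  shows "\<sigma> = id \<or> \<sigma> = transpose 0 1 \<or> \<sigma> = transpose 0 2 \<or> \<sigma> = transpose 1 2
    \<or> \<sigma> = transpose 0 1 \<circ> transpose 1 2 \<or> \<sigma> = transpose 1 2 \<circ> transpose 0 1"
proof -
  have eqI: "\<sigma> = \<tau>" if "\<tau> permutes {0,1,2}" "\<tau> 0 = \<sigma> 0" "\<tau> 1 = \<sigma> 1" "\<tau> 2 = \<sigma> 2" for \<tau>
    using that assms by (intro ext) (metis insertE permutes_not_in singletonD)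
  have swap: "transpose a b permutes {0,1,2::nat}" if "a \<in> {0,1,2}" "b \<in> {0,1,2}" for a b
    using that by (intro permutes_swap_id) auto
  have "\<sigma> 0 \<in> {0,1,2}" "\<sigma> 1 \<in> {0,1,2}" "\<sigma> 2 \<in> {0,1,2}"
    using permutes_in_image[OF assms] by auto
  moreover have "\<sigma> 0 \<noteq> \<sigma> 1" "\<sigma> 0 \<noteq> \<sigma> 2" "\<sigma> 1 \<noteq> \<sigma> 2"
    using permutes_inj[OF assms] by (simp_all add: inj_eq)
  moreover note eqI[OF permutes_id] eqI[OF swap[of 0 1]] eqI[OF swap[of 0 2]] eqI[OF swap[of 1 2]]
    eqI[OF permutes_compose[OF swap[of 1 2] swap[of 0 1]]]
    eqI[OF permutes_compose[OF swap[of 0 1] swap[of 1 2]]]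
  ultimately show ?thesis
    by (elim insertE emptyE) (simp_all add: transpose_def)
qed

lemma permutation_if_permutes_012: "\<sigma> permutes {0,1,2::nat} \<Longrightarrow> permutation \<sigma>"
  unfolding permutation_permutes by (intro exI[of _ "{0,1,2}"]) simp

lemma of_int_sign_neq_0 [simp]: "(of_int (sign \<sigma>) :: 'k::ring_char_0) \<noteq> 0"
  by (cases rule: sign_cases[of \<sigma>]) auto

lemma permutes_012_sorting:
  fixes a :: "nat \<Rightarrow> 'a::linorder"
  assumes "a 0 \<noteq> a 1" "a 0 \<noteq> a 2" "a 1 \<noteq> a 2"
  obtains \<sigma> where "\<sigma> permutes {0,1,2}" "a (\<sigma> 0) > a (\<sigma> 1)" "a (\<sigma> 1) > a (\<sigma> 2)"
proof -
  have swap: "transpose i k permutes {0,1,2::nat}" if "i \<in> {0,1,2}" "k \<in> {0,1,2}" for i k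
    using that by (intro permutes_swap_id) auto
  note candidates = that[OF permutes_id] that[OF swap[of 0 1]] that[OF swap[of 0 2]]
    that[OF swap[of 1 2]] that[OF permutes_compose[OF swap[of 1 2] swap[of 0 1]]]
    that[OF permutes_compose[OF swap[of 0 1] swap[of 1 2]]]
  show thesis
    using assms by (cases "a 0 < a 1"; cases "a 0 < a 2"; cases "a 1 < a 2")
      (auto intro: candidates simp: transpose_def)
qed

section \<open>Monomials and alternants\<close>

lemma expo_of_simps [simp]:
  "expo_of (a,b,c) 0 = a" "expo_of (a,b,c) (Suc 0) = b" "expo_of (a,b,c) 2 = c"
  "i \<ge> 3 \<Longrightarrow> expo_of (a,b,c) i = 0"
  by (auto simp: expo_of_def)

lemma finite_Pplus: "finite (Pplus l n)"
proof (rule finite_subset)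
  show "Pplus l n \<subseteq> {..l} \<times> {..l} \<times> {..l}" by (auto simp: Pplus_def)
qed auto

lemma expo_of_comp_permutes_eq_iff:
  assumes "\<mu> \<in> Pplus l n" "\<nu> \<in> Pplus l' n'" "\<sigma> permutes {0,1,2::nat}"
  shows "expo_of \<nu> \<circ> \<sigma> = expo_of \<mu> \<longleftrightarrow> \<sigma> = id \<and> \<nu> = \<mu>"
proof
  assume eq: "expo_of \<nu> \<circ> \<sigma> = expo_of \<mu>"
  obtain a b c a' b' c' where \<mu>: "\<mu> = (a,b,c)" and \<nu>: "\<nu> = (a',b',c')"
    by (cases \<mu>, cases \<nu>) auto
  have "a > b" "b > c" "a' > b'" "b' > c'" using assms(1,2) by (auto simp: \<mu> \<nu> Pplus_def)
  moreover have h: "expo_of \<nu> (\<sigma> 0) = a" "expo_of \<nu> (\<sigma> 1) = b" "expo_of \<nu> (\<sigma> 2) = c"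
    using fun_cong[OF eq, of 0] fun_cong[OF eq, of 1] fun_cong[OF eq, of 2] by (simp_all add: \<mu>)
  ultimately have "\<sigma> = id" using permutes_012_cases[OF assms(3)]
    by (elim disjE) (simp_all add: \<nu> transpose_def)
  with h show "\<sigma> = id \<and> \<nu> = \<mu>" by (simp add: \<mu> \<nu>)
qed auto

lemma mons_comp_permutes:
  assumes \<tau>: "\<tau> permutes {0,1,2::nat}" and e: "e \<in> mons d j"
  shows "e \<circ> \<tau> \<in> mons d j"
proof -
  have "(\<Sum>i\<in>{0,1,2::nat}. (e \<circ> \<tau>) i) = (\<Sum>i\<in>{0,1,2}. e i)"
    using sum.permute[OF \<tau>, of e] by simp
  moreover have "\<tau> i < 3" if "i < 3" for i
    using permutes_in_image[OF \<tau>, of i] that by auto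
  moreover have "\<tau> i = i" if "i \<ge> 3" for i
    using permutes_not_in[OF \<tau>] that by auto
  ultimately show ?thesis using e by (auto simp: mons_def)
qed

lemma expo_of_in_mons: "\<mu> \<in> Pplus (d - 1) (int j) \<Longrightarrow> expo_of \<mu> \<in> mons d j"
  by (cases \<mu>) (auto simp: mons_def Pplus_def expo_of_def)

lemma expo_of_mons:
  assumes "e \<in> mons d j"
  shows "expo_of (e 0, e 1, e 2) = e"
  using assms by (auto simp: mons_def expo_of_def fun_eq_iff)

lemma alt_apply:
  "alt \<mu> e = (\<Sum>\<sigma> | \<sigma> permutes {0,1,2::nat}. of_int (sign \<sigma>) * monom3 \<mu> (e \<circ> \<sigma>))"
  by (simp add: alt_def sum_fun_apply act_def)

lemma alt_expo_of:
  assumes "\<mu> \<in> Pplus l n" "\<nu> \<in> Pplus l' n'"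
  shows "(alt \<mu> (expo_of \<nu>) :: 'k::field) = (if \<mu> = \<nu> then 1 else 0)"
proof -
  have "alt \<mu> (expo_of \<nu>) =
      (\<Sum>\<sigma> | \<sigma> permutes {0,1,2::nat}. if \<sigma> = id then (if \<mu> = \<nu> then 1 else 0) else (0::'k))"
    unfolding alt_apply
    by (rule sum.cong) (auto simp: monom3_def expo_of_comp_permutes_eq_iff[OF assms])
  also have "\<dots> = (if \<mu> = \<nu> then 1 else 0)"
    by (subst sum.delta[OF finite_permutations]) (simp_all add: permutes_id)
  finally show ?thesis .
qed

lemma alt_in_Adeg:
  assumes \<mu>: "\<mu> \<in> Pplus (d - 1) (int j)"
  shows "(alt \<mu> :: expo \<Rightarrow> 'k::field) \<in> Adeg d j"
  unfolding Adeg_def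
proof (intro CollectI allI impI)
  fix e assume e: "e \<notin> mons d j"
  have "e \<circ> \<tau> \<noteq> expo_of \<mu>" if "\<tau> permutes {0,1,2}" for \<tau>
  proof
    assume "e \<circ> \<tau> = expo_of \<mu>"
    then have "e = expo_of \<mu> \<circ> inv \<tau>"
      using permutes_inv_o(1)[OF that] by (metis comp_assoc comp_id)
    then show False
      using e mons_comp_permutes[OF permutes_inv[OF that] expo_of_in_mons[OF \<mu>]] by simp
  qed
  then show "alt \<mu> e = (0::'k)"
    unfolding alt_apply by (intro sum.neutral) (simp add: monom3_def)
qed

lemma sign_isotypic_alt: "sign_isotypic (alt \<mu> :: expo \<Rightarrow> 'k::field)"
  unfolding sign_isotypic_def
proof (intro allI impI ext)
  fix \<sigma> :: "nat \<Rightarrow> nat" and e :: expo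
  assume \<sigma>: "\<sigma> permutes {0,1,2}"
  have "act \<sigma> (alt \<mu>) e
      = (\<Sum>\<tau> | \<tau> permutes {0,1,2::nat}. of_int (sign \<tau>) * (monom3 \<mu> (e \<circ> \<sigma> \<circ> \<tau>) :: 'k))"
    by (simp add: act_def alt_apply)
  also have "\<dots> = (\<Sum>\<tau> | \<tau> permutes {0,1,2::nat}.
           of_int (sign \<sigma> * sign (\<sigma> \<circ> \<tau>)) * monom3 \<mu> (e \<circ> (\<sigma> \<circ> \<tau>)))"
    using \<sigma> by (intro sum.cong)
      (simp_all add: sign_compose permutation_if_permutes_012 mult.assoc[symmetric] o_assoc)
  also have "\<dots> = of_int (sign \<sigma>) * alt \<mu> e"
    unfolding alt_apply sum_distrib_left
    by (subst setum_permutations_compose_left[OF \<sigma>]) (simp add: mult.assoc)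
  finally show "act \<sigma> (alt \<mu>) e = of_int (sign \<sigma>) * (alt \<mu> e :: 'k)" .
qed

lemma sum_scaled_alt_expo_of:
  assumes "\<nu> \<in> Pplus l n"
  shows "(\<Sum>\<mu>\<in>Pplus l n. (\<lambda>e. \<beta> \<mu> * (alt \<mu> e :: 'k::field))) (expo_of \<nu>) = \<beta> \<nu>"
proof -
  have "(\<Sum>\<mu>\<in>Pplus l n. (\<lambda>e. \<beta> \<mu> * (alt \<mu> e :: 'k))) (expo_of \<nu>)
      = (\<Sum>\<mu>\<in>Pplus l n. if \<mu> = \<nu> then \<beta> \<mu> else 0)"
    unfolding sum_fun_apply by (rule sum.cong) (auto simp: alt_expo_of[OF _ assms])
  also have "\<dots> = \<beta> \<nu>" using assms by (simp add: finite_Pplus)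
  finally show ?thesis .
qed

section \<open>The sign-isotypic component\<close>

lemma sign_isotypic_apply:
  "sign_isotypic Q \<Longrightarrow> \<sigma> permutes {0,1,2::nat} \<Longrightarrow> Q (e \<circ> \<sigma>) = of_int (sign \<sigma>) * Q e"
  unfolding sign_isotypic_def act_def by (metis fun_cong)

lemma sign_isotypic_repeated_exponent:
  fixes Q :: "expo \<Rightarrow> 'k::field_char_0"
  assumes Q: "sign_isotypic Q" and ik: "i \<in> {0,1,2}" "k \<in> {0,1,2}" "i \<noteq> k" and "e i = e k"
  shows "Q e = 0"
proof -
  have "e \<circ> transpose i k = e"
    using \<open>e i = e k\<close> by (auto simp: fun_eq_iff transpose_def)
  then have "Q e = - Q e"
    using sign_isotypic_apply[OF Q permutes_swap_id[OF ik(1,2)], of e] ik(3)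
    by (simp add: sign_swap_id)
  then show ?thesis by simp
qed

definition sign_component :: "nat \<Rightarrow> nat \<Rightarrow> (expo \<Rightarrow> 'k::field) set" where
  "sign_component d j = {P \<in> Adeg d j. sign_isotypic P}"

lemma sign_component_eq_0I:
  fixes Q :: "expo \<Rightarrow> 'k::field_char_0"
  assumes Q: "Q \<in> sign_component d j"
    and vanish: "\<And>\<mu>. \<mu> \<in> Pplus (d - 1) (int j) \<Longrightarrow> Q (expo_of \<mu>) = 0"
  shows "Q = 0"
proof
  fix e
  have iso: "sign_isotypic Q" using Q by (simp add: sign_component_def)
  show "Q e = 0 e"
  proof (cases "e \<in> mons d j")
    case False
    then show ?thesis using Q by (simp add: sign_component_def Adeg_def)
  next
    case e: True
    consider "e 0 = e 1" | "e 0 = e 2" | "e 1 = e 2" | "e 0 \<noteq> e 1" "e 0 \<noteq> e 2" "e 1 \<noteq> e 2"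
      by blast
    then show ?thesis
    proof cases
      case 4
      then obtain \<sigma> where \<sigma>: "\<sigma> permutes {0,1,2}" "e (\<sigma> 0) > e (\<sigma> 1)" "e (\<sigma> 1) > e (\<sigma> 2)"
        by (rule permutes_012_sorting)
      have e\<sigma>: "e \<circ> \<sigma> \<in> mons d j" by (rule mons_comp_permutes[OF \<sigma>(1) e])
      then have "e (\<sigma> 0) < d" "e (\<sigma> 0) + e (\<sigma> 1) + e (\<sigma> 2) = j"
        by (simp_all add: mons_def)
      then have "(e (\<sigma> 0), e (\<sigma> 1), e (\<sigma> 2)) \<in> Pplus (d - 1) (int j)"
        using \<sigma>(2,3) by (auto simp: Pplus_def)
      with vanish have "Q (e \<circ> \<sigma>) = 0"
        using expo_of_mons[OF e\<sigma>] by fastforce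
      then show ?thesis using sign_isotypic_apply[OF iso \<sigma>(1)] by simp
    qed (use sign_isotypic_repeated_exponent[OF iso, of 0 1 e]
        sign_isotypic_repeated_exponent[OF iso, of 0 2 e]
        sign_isotypic_repeated_exponent[OF iso, of 1 2 e] in simp_all)
  qed
qed

interpretation V: vector_space "\<lambda>(c::'k::field) (f::expo \<Rightarrow> 'k). (\<lambda>x. c * f x)"
  by unfold_locales (auto simp: algebra_simps fun_eq_iff)

lemma subspace_sign_component: "V.subspace (sign_component d j :: (expo \<Rightarrow> 'k::field) set)"
  by (auto simp: V.subspace_def sign_component_def Adeg_def sign_isotypic_def act_def
      fun_eq_iff algebra_simps)

lemma alt_in_sign_component:
  "\<mu> \<in> Pplus (d - 1) (int j) \<Longrightarrow> (alt \<mu> :: expo \<Rightarrow> 'k::field) \<in> sign_component d j"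
  by (simp add: sign_component_def alt_in_Adeg sign_isotypic_alt)

lemma sign_component_iff_alt_combination:
  "(P :: expo \<Rightarrow> 'k::field_char_0) \<in> sign_component d j \<longleftrightarrow>
    (\<exists>\<beta>. P = (\<Sum>\<mu>\<in>Pplus (d - 1) (int j). (\<lambda>e. \<beta> \<mu> * alt \<mu> e)))"
proof -
  have combination: "(\<Sum>\<mu>\<in>Pplus (d - 1) (int j). (\<lambda>e. \<beta> \<mu> * (alt \<mu> e :: 'k)))
      \<in> sign_component d j" for \<beta>
    by (intro V.subspace_sum[OF subspace_sign_component] V.subspace_scale[OF subspace_sign_component]
        alt_in_sign_component)
  show ?thesis
  proof
    assume P: "P \<in> sign_component d j"
    define R where "R = (\<Sum>\<mu>\<in>Pplus (d - 1) (int j). (\<lambda>e. P (expo_of \<mu>) * (alt \<mu> e :: 'k)))"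
    have "P - R = 0"
    proof (rule sign_component_eq_0I)
      show "P - R \<in> sign_component d j"
        unfolding R_def by (intro V.subspace_diff[OF subspace_sign_component] P combination)
      show "(P - R) (expo_of \<mu>) = 0" if "\<mu> \<in> Pplus (d - 1) (int j)" for \<mu>
        using sum_scaled_alt_expo_of[OF that, of "\<lambda>\<mu>. P (expo_of \<mu>)"] by (simp add: R_def)
    qed
    then show "\<exists>\<beta>. P = (\<Sum>\<mu>\<in>Pplus (d - 1) (int j). (\<lambda>e. \<beta> \<mu> * alt \<mu> e))"
      by (auto simp: R_def)
  qed (use combination in auto)
qed

lemma inj_on_alt: "inj_on (alt :: _ \<Rightarrow> expo \<Rightarrow> 'k::field) (Pplus l n)"
proof
  fix \<mu> \<nu> assume "\<mu> \<in> Pplus l n" "\<nu> \<in> Pplus l n" "(alt \<mu> :: expo \<Rightarrow> 'k) = alt \<nu>"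
  then show "\<mu> = \<nu>"
    using alt_expo_of[of \<mu> l n \<nu> l n, where 'k='k] alt_expo_of[of \<nu> l n \<nu> l n, where 'k='k]
    by (metis zero_neq_one)
qed

lemma independent_alt: "V.independent ((alt :: _ \<Rightarrow> expo \<Rightarrow> 'k::field) ` Pplus l n)"
proof (rule V.independent_if_scalars_zero)
  show "finite ((alt :: _ \<Rightarrow> expo \<Rightarrow> 'k) ` Pplus l n)" by (simp add: finite_Pplus)
next
  fix u :: "(expo \<Rightarrow> 'k) \<Rightarrow> 'k" and v :: "expo \<Rightarrow> 'k"
  assume "(\<Sum>v\<in>alt ` Pplus l n. (\<lambda>x. u v * v x)) = 0" and "v \<in> alt ` Pplus l n"
  then obtain \<nu> where \<nu>: "\<nu> \<in> Pplus l n" "v = alt \<nu>"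
    and "(\<Sum>\<mu>\<in>Pplus l n. (\<lambda>x. u (alt \<mu>) * alt \<mu> x)) = 0"
    by (auto simp: sum.reindex[OF inj_on_alt])
  then show "u v = 0"
    using sum_scaled_alt_expo_of[OF \<nu>(1), of "\<lambda>\<mu>. u (alt \<mu>)"] by simp
qed

lemma sign_component_subset_span:
  "(sign_component d j :: (expo \<Rightarrow> 'k::field_char_0) set)
     \<subseteq> V.span (alt ` Pplus (d - 1) (int j))"
proof
  fix P :: "expo \<Rightarrow> 'k" assume "P \<in> sign_component d j"
  then obtain \<beta> where "P = (\<Sum>\<mu>\<in>Pplus (d - 1) (int j). (\<lambda>e. \<beta> \<mu> * alt \<mu> e))"
    by (auto simp: sign_component_iff_alt_combination)
  then show "P \<in> V.span (alt ` Pplus (d - 1) (int j))"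
    by (auto intro: V.span_sum V.span_scale V.span_base)
qed

lemma dim_sign_component:
  "V.dim (sign_component d j :: (expo \<Rightarrow> 'k::field_char_0) set) = pplus (d - 1) (int j)"
proof (rule V.dim_unique)
  show "(alt ` Pplus (d - 1) (int j) :: (expo \<Rightarrow> 'k) set) \<subseteq> sign_component d j"
    by (auto intro: alt_in_sign_component)
  show "card (alt ` Pplus (d - 1) (int j) :: (expo \<Rightarrow> 'k) set) = pplus (d - 1) (int j)"
    by (simp add: card_image[OF inj_on_alt] pplus_def)
qed (rule sign_component_subset_span independent_alt)+

lemma dim_subset_0: "S \<subseteq> {0 :: expo \<Rightarrow> 'k::field} \<Longrightarrow> V.dim S = 0"
  using V.dim_le_card[of S "{}"] by simp

(* Multiplication by x_1 + x_2 + x_3 in A(d), written on coefficients like Eop. *)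

definition Fop :: "nat \<Rightarrow> (expo \<Rightarrow> 'k::field) \<Rightarrow> (expo \<Rightarrow> 'k)" where
  "Fop d P = (\<lambda>e. \<Sum>k<3. of_bool (0 < e k \<and> e k < d) * P (e(k := e k - 1)))"

lemma act_coordinatewise_operator:
  fixes P :: "expo \<Rightarrow> 'k::field" and w :: "nat \<Rightarrow> 'k" and s :: "nat \<Rightarrow> nat"
  assumes \<sigma>: "\<sigma> permutes {0,1,2::nat}"
  shows "act \<sigma> (\<lambda>e. \<Sum>k<3. w (e k) * P (e(k := s (e k))))
    = (\<lambda>e. \<Sum>k<3. w (e k) * act \<sigma> P (e(k := s (e k))))"
proof
  fix e :: expo
  have "{..<3::nat} = {0,1,2}" by auto
  then have bij: "bij_betw \<sigma> {..<3} {..<3}" using permutes_imp_bij[OF \<sigma>] by simp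
  have upd: "e(\<sigma> k := v) \<circ> \<sigma> = (e \<circ> \<sigma>)(k := v)" for k v
    using permutes_inj[OF \<sigma>] by (auto simp: fun_eq_iff inj_eq)
  have "act \<sigma> (\<lambda>e. \<Sum>k<3. w (e k) * P (e(k := s (e k)))) e
      = (\<Sum>k<3. w (e (\<sigma> k)) * P (e(\<sigma> k := s (e (\<sigma> k))) \<circ> \<sigma>))"
    by (simp add: act_def upd)
  also have "\<dots> = (\<Sum>k<3. w (e k) * P (e(k := s (e k)) \<circ> \<sigma>))"
    by (rule sum.reindex_bij_betw[OF bij])
  finally show "act \<sigma> (\<lambda>e. \<Sum>k<3. w (e k) * P (e(k := s (e k)))) e
      = (\<Sum>k<3. w (e k) * act \<sigma> P (e(k := s (e k))))"
    by (simp add: act_def)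
qed

lemma linear_coordinatewise_operator:
  fixes w :: "nat \<Rightarrow> 'k::field" and s :: "nat \<Rightarrow> nat"
  shows "Vector_Spaces.linear (\<lambda>(c::'k) (f::expo \<Rightarrow> 'k) x. c * f x) (\<lambda>c f x. c * f x)
    (\<lambda>P e. \<Sum>k<3. w (e k) * P (e(k := s (e k))))"
  unfolding Vector_Spaces.linear_iff
  by (auto simp: V.vector_space_axioms fun_eq_iff sum.distrib sum_distrib_left algebra_simps)

lemma linear_Eop:
  "Vector_Spaces.linear (\<lambda>(c::'k::field) (f::expo \<Rightarrow> 'k) x. c * f x) (\<lambda>c f x. c * f x) (Eop d)"
  using linear_coordinatewise_operator unfolding Eop_def[abs_def] .

lemma linear_Fop:
  "Vector_Spaces.linear (\<lambda>(c::'k::field) (f::expo \<Rightarrow> 'k) x. c * f x) (\<lambda>c f x. c * f x) (Fop d)"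
  using linear_coordinatewise_operator unfolding Fop_def[abs_def] .

lemma Eop_scale: "Eop d (\<lambda>e. a * P e) = (\<lambda>e. a * Eop d P e)"
  by (simp add: Eop_def sum_distrib_left mult.left_commute)

lemma Fop_0 [simp]: "Fop d 0 = 0"
  by (simp add: Fop_def fun_eq_iff)

lemma mons_of_upd_Suc:
  "k < 3 \<Longrightarrow> e(k := e k + 1) \<in> mons d (Suc m) \<Longrightarrow> e \<in> mons d m"
  unfolding mons_def
proof (intro CollectI conjI allI impI; elim CollectE conjE)
  assume k: "k < 3" and out: "\<forall>i\<ge>3. (e(k := e k + 1)) i = 0"
    and lt: "\<forall>i<3. (e(k := e k + 1)) i < d"
    and sum: "(e(k := e k + 1)) 0 + (e(k := e k + 1)) 1 + (e(k := e k + 1)) 2 = Suc m"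
  fix i
  show "3 \<le> i \<Longrightarrow> e i = 0" using out k by (metis fun_upd_apply not_le)
  show "i < 3 \<Longrightarrow> e i < d" using lt[rule_format, of i] by (cases "i = k") auto
  have "k = 0 \<or> k = 1 \<or> k = 2" using k by auto
  then show "e 0 + e 1 + e 2 = m" using sum by auto
qed

lemma mons_Suc_of_upd:
  "k < 3 \<Longrightarrow> 0 < e k \<Longrightarrow> e k < d \<Longrightarrow> e(k := e k - 1) \<in> mons d m \<Longrightarrow> e \<in> mons d (Suc m)"
  unfolding mons_def
proof (intro CollectI conjI allI impI; elim CollectE conjE)
  assume k: "k < 3" "0 < e k" "e k < d" and out: "\<forall>i\<ge>3. (e(k := e k - 1)) i = 0"
    and lt: "\<forall>i<3. (e(k := e k - 1)) i < d"
    and sum: "(e(k := e k - 1)) 0 + (e(k := e k - 1)) 1 + (e(k := e k - 1)) 2 = m"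
  fix i
  show "3 \<le> i \<Longrightarrow> e i = 0" using out k by (metis fun_upd_apply not_le)
  show "i < 3 \<Longrightarrow> e i < d" using lt[rule_format, of i] k by (cases "i = k") auto
  have "k = 0 \<or> k = 1 \<or> k = 2" using k by auto
  then show "e 0 + e 1 + e 2 = Suc m" using sum k by auto
qed

lemma Eop_in_Adeg: "P \<in> Adeg d (Suc m) \<Longrightarrow> Eop d P \<in> Adeg d m"
  unfolding Adeg_def Eop_def
  by (auto intro!: sum.neutral dest: mons_of_upd_Suc)

lemma Eop_Adeg_0: "P \<in> Adeg d 0 \<Longrightarrow> Eop d P = 0"
proof
  fix e assume P: "P \<in> Adeg d 0"
  have "e(k := e k + 1) \<notin> mons d 0" if "k < 3" for k
    using that by (auto simp: mons_def)
  then show "Eop d P e = 0 e"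
    using P by (auto simp: Adeg_def Eop_def intro!: sum.neutral)
qed

lemma Fop_in_Adeg: "P \<in> Adeg d m \<Longrightarrow> Fop d P \<in> Adeg d (Suc m)"
  unfolding Adeg_def Fop_def
  by (auto intro!: sum.neutral dest: mons_Suc_of_upd)

lemma sign_isotypic_coordinatewise_operator:
  fixes P :: "expo \<Rightarrow> 'k::field" and w :: "nat \<Rightarrow> 'k" and s :: "nat \<Rightarrow> nat"
  assumes "sign_isotypic P"
  shows "sign_isotypic (\<lambda>e. \<Sum>k<3. w (e k) * P (e(k := s (e k))))"
  using assms unfolding sign_isotypic_def
  by (simp add: act_coordinatewise_operator sum_distrib_left mult.left_commute)

lemma sign_isotypic_Eop: "sign_isotypic P \<Longrightarrow> sign_isotypic (Eop d P)"
  unfolding Eop_def by (rule sign_isotypic_coordinatewise_operator)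

lemma sign_isotypic_Fop: "sign_isotypic P \<Longrightarrow> sign_isotypic (Fop d P)"
  unfolding Fop_def by (rule sign_isotypic_coordinatewise_operator)

lemma Eop_in_sign_component:
  "P \<in> sign_component d (Suc m) \<Longrightarrow> Eop d P \<in> sign_component d m"
  by (simp add: sign_component_def Eop_in_Adeg sign_isotypic_Eop)

lemma Fop_in_sign_component:
  "P \<in> sign_component d m \<Longrightarrow> Fop d P \<in> sign_component d (Suc m)"
  by (simp add: sign_component_def Fop_in_Adeg sign_isotypic_Fop)

section \<open>The commutator of E and F\<close>

lemma Eop_Fop_commutator_apply:
  fixes P :: "expo \<Rightarrow> 'k::field"
  assumes e: "e \<in> mons d m"
  shows "Eop d (Fop d P) e - Fop d (Eop d P) e = (of_nat (3 * (d - 1)) - 2 * of_nat m) * P e"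
proof -
  define c where "c a = (of_nat (a * (d - a)) :: 'k)" for a
  define up where "up k = e(k := e k + 1)" for k
  define down where "down l = e(l := e l - 1)" for l
  define a where "a k l = c (e k + 1) * (of_bool (0 < up k l \<and> up k l < d) * P ((up k)(l := up k l - 1)))"
    for k l
  define b where "b k l = of_bool (0 < e l \<and> e l < d) * (c (down l k + 1) * P ((down l)(k := down l k + 1)))"
    for k l
  have lt: "e k < d" if "k < 3" for k
    using e that by (simp add: mons_def)
  have EF: "Eop d (Fop d P) e = (\<Sum>k<3. \<Sum>l<3. a k l)"
    by (simp only: Eop_def Fop_def a_def c_def up_def sum_distrib_left)
  have FE: "Fop d (Eop d P) e = (\<Sum>k<3. \<Sum>l<3. b k l)"
    unfolding Eop_def Fop_def b_def c_def down_def sum_distrib_left by (rule sum.swap)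
  have off_diagonal: "a k l = b k l" if "k \<noteq> l" for k l
    using that by (simp add: a_def b_def up_def down_def fun_upd_twist mult.left_commute)
  \<comment> \<open>the truncation in Fop is invisible here: the weight i (d - i) vanishes at i = 0 and i = d\<close>
  have diagonal: "a k k - b k k = (of_nat d - 1 - 2 * of_nat (e k)) * P e" if "e k < d" for k
  proof -
    have "a k k = c (e k + 1) * P e" by (auto simp: a_def up_def c_def)
    moreover have "b k k = c (e k) * P e"
      using that by (cases "e k = 0") (simp_all add: b_def down_def c_def)
    ultimately have "a k k - b k k = (c (e k + 1) - c (e k)) * P e"
      by (simp add: left_diff_distrib)
    then show ?thesis
      using of_nat_mult_diff_Suc[OF that, where 'k='k] by (simp add: c_def)
  qed
  have "Eop d (Fop d P) e - Fop d (Eop d P) e = (\<Sum>k<3. a k k - b k k)"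
    unfolding EF FE by (rule sum_sum_diff_diagonal) (simp_all add: off_diagonal)
  also have "\<dots> = (\<Sum>k<3. (of_nat d - 1 - 2 * of_nat (e k)) * P e)"
    by (simp add: diagonal lt)
  also have "\<dots> = (of_nat (3 * (d - 1)) - 2 * of_nat m) * P e"
  proof -
    have "m = e 0 + e 1 + e 2" using e by (simp add: mons_def)
    then have m: "of_nat m = (of_nat (e 0) + of_nat (e 1) + of_nat (e 2) :: 'k)" by simp
    have d: "of_nat (3 * (d - 1)) = (3 * of_nat d - 3 :: 'k)"
      using lt[of 0] by (simp add: of_nat_diff)
    have "{..<3::nat} = {0, 1, 2}" by auto
    then show ?thesis unfolding m d by (simp add: algebra_simps)
  qed
  finally show ?thesis .
qed

lemma Eop_Fop_commutator:
  fixes P :: "expo \<Rightarrow> 'k::field"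
  assumes P: "P \<in> Adeg d m"
  shows "Eop d (Fop d P) = (\<lambda>e. Fop d (Eop d P) e + (of_nat (3 * (d - 1)) - 2 * of_nat m) * P e)"
proof
  fix e
  show "Eop d (Fop d P) e = Fop d (Eop d P) e + (of_nat (3 * (d - 1)) - 2 * of_nat m) * P e"
  proof (cases "e \<in> mons d m")
    case True
    then show ?thesis using Eop_Fop_commutator_apply[OF True, of P] by (simp add: algebra_simps)
  next
    case False
    have "Fop d (Eop d P) \<in> Adeg d m"
    proof (cases m)
      case 0
      then show ?thesis using Eop_Adeg_0[of P d] P by (simp add: Adeg_def)
    qed (use P Eop_in_Adeg Fop_in_Adeg in blast)
    then show ?thesis
      using P Eop_in_Adeg[OF Fop_in_Adeg[OF P]] False by (simp add: Adeg_def)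
  qed
qed

lemma Fop_Eop_eq_neg_scale:
  fixes P :: "expo \<Rightarrow> 'k::field"
  assumes "P \<in> Adeg d m" "2 * m \<le> 3 * (d - 1)" "Eop d (Fop d P) = (\<lambda>e. - of_nat c * P e)"
  shows "Fop d (Eop d P) = (\<lambda>e. - of_nat (c + (3 * (d - 1) - 2 * m)) * P e)"
proof
  fix e
  obtain h where h: "3 * (d - 1) = 2 * m + h" using assms(2) le_Suc_ex by blast
  have "- of_nat c * P e = Fop d (Eop d P) e + (of_nat (3 * (d - 1)) - 2 * of_nat m) * P e"
    using fun_cong[OF assms(3), of e] Eop_Fop_commutator[OF assms(1)] by metis
  then show "Fop d (Eop d P) e = - of_nat (c + (3 * (d - 1) - 2 * m)) * P e"
    unfolding h by (simp add: algebra_simps)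
qed

lemma Eop_Fop_eq_neg_scale_imp_0:
  fixes P :: "expo \<Rightarrow> 'k::field_char_0"
  assumes "2 * m < 3 * (d - 1)" "P \<in> Adeg d m" "Eop d (Fop d P) = (\<lambda>e. - of_nat c * P e)"
  shows "P = 0"
proof -
  have eq_0_if_Eop_eq_0: "Q = 0"
    if Q: "Q \<in> Adeg d n" "2 * n < 3 * (d - 1)" "Eop d (Fop d Q) = (\<lambda>e. - of_nat c' * Q e)"
      and "Eop d Q = 0" for Q :: "expo \<Rightarrow> 'k" and n c'
  proof
    fix e
    have "c' + (3 * (d - 1) - 2 * n) \<noteq> 0" using Q(2) by simp
    moreover have "- of_nat (c' + (3 * (d - 1) - 2 * n)) * Q e = 0"
      using fun_cong[OF Fop_Eop_eq_neg_scale[OF Q(1) _ Q(3)], of e] that(2,4) by simp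
    ultimately show "Q e = 0 e" by (auto simp del: of_nat_add)
  qed
  \<comment> \<open>E P satisfies the same equation one degree lower, with a more negative eigenvalue\<close>
  show ?thesis
    using assms
  proof (induction m arbitrary: P c)
    case (0 P c)
    then show ?case using eq_0_if_Eop_eq_0 Eop_Adeg_0 by blast
  next
    case (Suc m P c)
    have "Eop d P = 0"
    proof (rule Suc.IH)
      show "Eop d P \<in> Adeg d m" using Suc.prems(2) by (rule Eop_in_Adeg)
      show "Eop d (Fop d (Eop d P)) = (\<lambda>e. - of_nat (c + (3 * (d - 1) - 2 * Suc m)) * Eop d P e)"
        using Fop_Eop_eq_neg_scale[OF Suc.prems(2) _ Suc.prems(3)] Suc.prems(1)
        by (simp add: Eop_scale)
    qed (use Suc.prems(1) in simp)
    then show ?case using eq_0_if_Eop_eq_0 Suc.prems by blast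
  qed
qed

interpretation V_pair: vector_space_pair "\<lambda>(c::'k::field) (f::expo \<Rightarrow> 'k) x. c * f x"
  "\<lambda>(c::'k) (f::expo \<Rightarrow> 'k) x. c * f x" ..

lemma dim_Eop_Fop_image_sign_component:
  assumes "2 * m < 3 * (d - 1)"
  shows "V.dim ((Eop d \<circ> Fop d) ` sign_component d m :: (expo \<Rightarrow> 'k::field_char_0) set)
    = pplus (d - 1) (int m)"
proof -
  have "{P \<in> sign_component d m. (Eop d \<circ> Fop d) P = 0} \<subseteq> {0 :: expo \<Rightarrow> 'k}"
    using Eop_Fop_eq_neg_scale_imp_0[OF assms, of _ 0]
    by (auto simp: sign_component_def zero_fun_def)
  then have "V.dim {P \<in> sign_component d m. (Eop d \<circ> Fop d) P = (0 :: expo \<Rightarrow> 'k)} = 0"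
    by (rule dim_subset_0)
  then show ?thesis
    using V_pair.dim_kernel_add_dim_image[OF
        Vector_Spaces.linear_compose[OF linear_Fop[of d, where 'k='k] linear_Eop[of d]]
        subspace_sign_component _ sign_component_subset_span[of d m]]
    by (simp add: dim_sign_component finite_Pplus)
qed

lemma dim_Eop_image_sign_component:
  assumes "j \<le> 3 * (d - 1) div 2"
  shows "V.dim (Eop d ` sign_component d j :: (expo \<Rightarrow> 'k::field_char_0) set)
    = pplus (d - 1) (int j - 1)"
proof (cases j)
  case 0
  then have "Eop d ` sign_component d j \<subseteq> {0 :: expo \<Rightarrow> 'k}"
    by (auto simp: sign_component_def Eop_Adeg_0)
  moreover have "Pplus (d - 1) (- 1) = {}" by (auto simp: Pplus_def)
  ultimately show ?thesis using 0 by (simp add: dim_subset_0 pplus_def)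
next
  case (Suc m)
  have image: "Eop d ` sign_component d j \<subseteq> (sign_component d m :: (expo \<Rightarrow> 'k) set)"
    by (auto simp: Suc intro: Eop_in_sign_component)
  have "V.dim (Eop d ` sign_component d j :: (expo \<Rightarrow> 'k) set) \<le> pplus (d - 1) (int m)"
    using V.dim_le_dim_if_finite_span[OF image sign_component_subset_span]
      dim_sign_component[where 'k='k] by (simp add: finite_Pplus)
  moreover have "pplus (d - 1) (int m) \<le> V.dim (Eop d ` sign_component d j :: (expo \<Rightarrow> 'k) set)"
  proof -
    have "2 * m < 3 * (d - 1)" using Suc assms by presburger
    then have "pplus (d - 1) (int m)
        = V.dim ((Eop d \<circ> Fop d) ` sign_component d m :: (expo \<Rightarrow> 'k) set)"
      by (rule dim_Eop_Fop_image_sign_component[symmetric])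
    also have "\<dots> \<le> V.dim (Eop d ` sign_component d j :: (expo \<Rightarrow> 'k) set)"
    proof (rule V.dim_le_dim_if_finite_span)
      show "(Eop d \<circ> Fop d) ` sign_component d m \<subseteq> (Eop d ` sign_component d j :: (expo \<Rightarrow> 'k) set)"
        by (auto simp: Suc intro: Fop_in_sign_component)
      show "Eop d ` sign_component d j \<subseteq> V.span (alt ` Pplus (d - 1) (int m) :: (expo \<Rightarrow> 'k) set)"
        using image sign_component_subset_span by blast
    qed (simp add: finite_Pplus)
    finally show ?thesis .
  qed
  ultimately show ?thesis using Suc by simp
qed

lemma sign_part_eq: "sign_part d j = {P \<in> sign_component d j. Eop d P = 0}"
  by (auto simp: sign_part_def kerE_def sign_component_def)

theorem theorem3p2:
  fixes d j :: nat
  assumes "d \<ge> 3" and "j \<le> (3 * (d - 1)) div 2"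
  shows "sign_part d j =
           {P :: expo \<Rightarrow> 'k::{alg_closed_field, field_char_0}.
              (\<exists>\<beta>. P = (\<Sum>\<mu>\<in>Pplus (d - 1) (int j). (\<lambda>e. \<beta> \<mu> * alt \<mu> e))) \<and> Eop d P = 0}
       \<and> int (sign_mult TYPE('k) d j) = int (pplus (d - 1) (int j)) - int (pplus (d - 1) (int j - 1))"
proof
  show "sign_part d j = {P :: expo \<Rightarrow> 'k.
      (\<exists>\<beta>. P = (\<Sum>\<mu>\<in>Pplus (d - 1) (int j). (\<lambda>e. \<beta> \<mu> * alt \<mu> e))) \<and> Eop d P = 0}"
    by (simp add: sign_part_eq sign_component_iff_alt_combination)
  have "pplus (d - 1) (int j)
      = sign_mult TYPE('k) d j + V.dim (Eop d ` sign_component d j :: (expo \<Rightarrow> 'k) set)"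
    using V_pair.dim_kernel_add_dim_image[OF linear_Eop subspace_sign_component _
        sign_component_subset_span]
    by (simp add: sign_mult_def sign_part_eq dim_sign_component finite_Pplus)
  then show "int (sign_mult TYPE('k) d j) = int (pplus (d - 1) (int j)) - int (pplus (d - 1) (int j - 1))"
    using dim_Eop_image_sign_component[OF assms(2), where 'k='k] by simp
qed

end
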